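(* Let $\mathcal{Y}=\{1,\dots,m\}$ be a finite set of classes and $\Delta(\mathcal{Y})$ the set of probability vectors on $\mathcal{Y}$. Let $u:\mathcal{Y}\times\mathcal{Y}\to\mathbb{R}_+$ be nonnegative and nondegenerate (for every $y$ there is $a$ with $u(a,y)>0$), and suppose the $m\times m$ matrix $U$ with entries $U_{y',y}=u(y',y)$ is invertible, with inverse $U^{-1}$. Let $\ell$ be a strictly proper loss function. Let $p^u:\Delta(\mathcal{Y})\to\Delta(\mathcal{Y})$ be the optimal utility-weighted prediction function, $p^u_y(q)=\bar u(y,q)/\sum_{y'}\bar u(y',q)$ where $\bar u(y,q)=\sum_{y'}u(y,y')q_{y'}$. Then $p^u$ is invertible, with closed-form inverse (on its image) $$[p^u_y]^{-1}(p)=\frac{\bar u^{-1}(y,p)}{\sum_{y'\in\mathcal{Y}}\bar u^{-1}(y',p)},$$ where $\bar u^{-1}(y,p)\equiv\sum_{y'\in\mathcal{Y}}(U^{-1})_{y,y'}\,p_{y'}$ is the expected utility of $y$ given $p$ under the (inverse) utility function defined by the matrix $U^{-1}$.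
   Context: A loss $\ell:\Delta(\mathcal{Y})\times\mathcal{Y}\to\mathbb{R}$ is strictly proper if for every $q\in\Delta(\mathcal{Y})$, $q$ is the unique minimizer over $p\in\Delta(\mathcal{Y})$ of $\sum_y q_y\ell(p,y)$; under this assumption $p^u(q)$ is the unique minimizer of $p\mapsto\sum_y q_y\sum_{y'}\ell(p,y')u(y',y)$. *)

theory Defs
  imports "HOL-Analysis.Analysis"
begin

definition prob_simplex :: "(real^'y::finite) set" where
  "prob_simplex = {q. (\<forall>y. 0 \<le> q $ y) \<and> (\<Sum>y\<in>UNIV. q $ y) = 1}"

definition strictly_proper :: "(real^'y::finite \<Rightarrow> 'y \<Rightarrow> real) \<Rightarrow> bool" where
  "strictly_proper l \<longleftrightarrow>
     (\<forall>q\<in>prob_simplex. \<forall>p\<in>prob_simplex. p \<noteq> q \<longrightarrow>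
        (\<Sum>y\<in>UNIV. q $ y * l q y) < (\<Sum>y\<in>UNIV. q $ y * l p y))"

definition ubar :: "('y::finite \<Rightarrow> 'y \<Rightarrow> real) \<Rightarrow> 'y \<Rightarrow> real^'y \<Rightarrow> real" where
  "ubar u y q = (\<Sum>y'\<in>UNIV. u y y' * q $ y')"

definition pu :: "('y::finite \<Rightarrow> 'y \<Rightarrow> real) \<Rightarrow> real^'y \<Rightarrow> real^'y" where
  "pu u q = (\<chi> y. ubar u y q / (\<Sum>y'\<in>UNIV. ubar u y' q))"

definition util_matrix :: "('y::finite \<Rightarrow> 'y \<Rightarrow> real) \<Rightarrow> real^'y^'y" where
  "util_matrix u = (\<chi> y' y. u y' y)"

definition ubar_inv :: "('y::finite \<Rightarrow> 'y \<Rightarrow> real) \<Rightarrow> 'y \<Rightarrow> real^'y \<Rightarrow> real" where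
  "ubar_inv u y p = (\<Sum>y'\<in>UNIV. matrix_inv (util_matrix u) $ y $ y' * p $ y')"

definition pu_inv :: "('y::finite \<Rightarrow> 'y \<Rightarrow> real) \<Rightarrow> real^'y \<Rightarrow> real^'y" where
  "pu_inv u p = (\<chi> y. ubar_inv u y p / (\<Sum>y'\<in>UNIV. ubar_inv u y' p))"

end

theory Submission
  imports Defs
begin

text \<open>Writing U for the utility matrix, pu u q is U q rescaled by the positive number
  sum_y (U q)_y. Applying U^-1 undoes U, and the final normalisation of pu_inv is
  insensitive to the scale factor, so it recovers q because q already sums to 1.
  Injectivity follows from this left inverse.\<close>

lemma matrix_inv_left:
  fixes A :: "'a::semiring_1^'n^'m"
  assumes "invertible A"
  shows "matrix_inv A ** A = mat 1"
proof -
  have "\<exists>A'. A ** A' = mat 1 \<and> A' ** A = mat 1"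
    using assms by (simp add: invertible_def)
  then have "A ** matrix_inv A = mat 1 \<and> matrix_inv A ** A = mat 1"
    unfolding matrix_inv_def by (rule someI_ex)
  then show ?thesis by simp
qed

lemma matrix_inv_mult_vector_cancel:
  fixes A :: "'a::comm_semiring_1^'n^'m"
  assumes "invertible A"
  shows "matrix_inv A *v (A *v x) = x"
  by (simp add: matrix_vector_mul_assoc matrix_inv_left[OF assms])

lemma ubar_eq_matrix_vector_mult: "ubar u y q = (util_matrix u *v q) $ y"
  by (simp add: ubar_def util_matrix_def matrix_vector_mult_def)

lemma ubar_inv_eq_matrix_vector_mult: "ubar_inv u y p = (matrix_inv (util_matrix u) *v p) $ y"
  by (simp add: ubar_inv_def matrix_vector_mult_def)

lemma pu_eq_scaleR: "pu u q = inverse (\<Sum>y\<in>UNIV. ubar u y q) *\<^sub>R (util_matrix u *v q)"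
  by (simp add: pu_def vec_eq_iff ubar_eq_matrix_vector_mult divide_inverse mult.commute)

lemma pu_inv_scaleR:
  assumes "c \<noteq> 0"
  shows "pu_inv u (c *\<^sub>R p) = pu_inv u p"
proof -
  have "ubar_inv u y (c *\<^sub>R p) = c * ubar_inv u y p" for y
    by (simp add: ubar_inv_eq_matrix_vector_mult matrix_vector_mult_scaleR)
  then show ?thesis
    using assms by (simp add: pu_inv_def vec_eq_iff sum_distrib_left[symmetric])
qed

lemma pu_inv_util_matrix_mult:
  assumes "invertible (util_matrix u)" and "(\<Sum>y\<in>UNIV. q $ y) = 1"
  shows "pu_inv u (util_matrix u *v q) = q"
  using assms
  by (simp add: pu_inv_def vec_eq_iff ubar_inv_eq_matrix_vector_mult
      matrix_inv_mult_vector_cancel)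

lemma sum_ubar_eq_column_sums:
  "(\<Sum>y\<in>UNIV. ubar u y q) = (\<Sum>y'\<in>UNIV. (\<Sum>y\<in>UNIV. u y y') * q $ y')"
  unfolding ubar_def sum_distrib_right by (rule sum.swap)

lemma sum_ubar_pos:
  fixes u :: "'y::finite \<Rightarrow> 'y \<Rightarrow> real"
  assumes nonneg: "\<forall>a y. 0 \<le> u a y"
    and nondeg: "\<forall>y. \<exists>a. 0 < u a y"
    and q_nonneg: "\<forall>y. 0 \<le> q $ y"
    and "q \<noteq> 0"
  shows "0 < (\<Sum>y\<in>UNIV. ubar u y q)"
proof -
  have column_sum_pos: "0 < (\<Sum>y\<in>UNIV. u y y')" for y'
  proof -
    obtain a where "0 < u a y'" using nondeg by blast
    moreover have "u a y' \<le> (\<Sum>y\<in>UNIV. u y y')"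
      by (rule member_le_sum) (use nonneg in auto)
    ultimately show ?thesis by linarith
  qed
  obtain y0 where "q $ y0 \<noteq> 0"
    using \<open>q \<noteq> 0\<close> by (auto simp: vec_eq_iff)
  then have "0 < q $ y0"
    using q_nonneg by (simp add: order_le_neq_trans)
  then have "0 < (\<Sum>y\<in>UNIV. u y y0) * q $ y0"
    using column_sum_pos by simp
  also have "\<dots> \<le> (\<Sum>y'\<in>UNIV. (\<Sum>y\<in>UNIV. u y y') * q $ y')"
    by (rule member_le_sum) (use column_sum_pos q_nonneg in \<open>auto intro: mult_nonneg_nonneg less_imp_le\<close>)
  finally show ?thesis
    by (simp add: sum_ubar_eq_column_sums)
qed

lemma pu_inv_pu:
  fixes u :: "'y::finite \<Rightarrow> 'y \<Rightarrow> real"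
  assumes nonneg: "\<forall>a y. 0 \<le> u a y"
    and nondeg: "\<forall>y. \<exists>a. 0 < u a y"
    and inv: "invertible (util_matrix u)"
    and q: "q \<in> prob_simplex"
  shows "pu_inv u (pu u q) = q"
proof -
  have q_nonneg: "\<forall>y. 0 \<le> q $ y" and q_sum: "(\<Sum>y\<in>UNIV. q $ y) = 1"
    using q by (auto simp: prob_simplex_def)
  then have "q \<noteq> 0" by auto
  then have "(\<Sum>y\<in>UNIV. ubar u y q) \<noteq> 0"
    using sum_ubar_pos[OF nonneg nondeg q_nonneg] by simp
  then show ?thesis
    by (simp add: pu_eq_scaleR pu_inv_scaleR pu_inv_util_matrix_mult inv q_sum)
qed

theorem theorem2:
  fixes u :: "'y::finite \<Rightarrow> 'y \<Rightarrow> real"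
    and l :: "real^'y \<Rightarrow> 'y \<Rightarrow> real"
  assumes nonneg: "\<forall>a y. 0 \<le> u a y"
    and nondeg: "\<forall>y. \<exists>a. 0 < u a y"
    and inv: "invertible (util_matrix u)"
    and proper: "strictly_proper l"
  shows "inj_on (pu u) prob_simplex \<and> (\<forall>q\<in>prob_simplex. pu_inv u (pu u q) = q)"
proof -
  have left_inverse: "\<forall>q\<in>prob_simplex. pu_inv u (pu u q) = q"
    using pu_inv_pu[OF nonneg nondeg inv] by blast
  then have "inj_on (pu u) prob_simplex"
    by (meson inj_on_inverseI)
  with left_inverse show ?thesis by blast
qed

end
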